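(* Let $R$ be a QNA with Goodearl–Yakimov elements $y_1,\ldots,y_N$. For all $i,j\in[1,N]$ with $i\neq j$, we have $y_iR\cap y_jR=y_iy_jR$.
   Context: ${\mathbb K}$ is a field of characteristic $0$. A quantum nilpotent algebra (QNA) is an iterated Ore extension $R={\mathbb K}[x_1][x_2;\sigma_2,\delta_2]\cdots[x_N;\sigma_N,\delta_N]$, where $R_k={\mathbb K}[x_1][x_2;\sigma_2,\delta_2]\cdots[x_k;\sigma_k,\delta_k]$ ($R_0={\mathbb K}$), $\sigma_k$ is a ${\mathbb K}$-automorphism and $\delta_k$ a $\sigma_k$-derivation of $R_{k-1}$, together with a torus $\mathcal H$ acting rationally by ${\mathbb K}$-automorphisms on $R$ with each $x_i$ an $\mathcal H$-eigenvector, such that: (i) $\sigma_k(x_j)=\lambda_{kj}x_j$ for $j<k$, with $\lambda_{kj}\in{\mathbb K}^*$; (ii) $\delta_k$ is locally nilpotent on $R_{k-1}$; (iii) for each $k$ there exist $h_k\in\mathcal H$ and $q_k\in{\mathbb K}^*$ not a root of unity such that $h_k$ acts on $R_{k-1}$ as $\sigma_k$ and $h_k\cdot x_k=q_kx_k$. The rank is $n=|\{k:\delta_k=0\}|$ and $\mathcal H=({\mathbb K}^* )^n$ is taken maximal. Homogeneous elements are the $\mathcal H$-eigenvectors. An element $u$ is normal if $uR=Ru$; a prime element is a nonzero normal $p$ with $pR$ a completely prime ideal. Goodearl–Yakimov elements: there is a surjective map $\mu:[1,N]\to[1,n]$ with predecessor $p(k)=\max\{j<k:\mu(j)=\mu(k)\}$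 (or $-\infty$ if none) and successor $s(k)=\min\{j>k:\mu(j)=\mu(k)\}$ (or $+\infty$ if none), and homogeneous elements $y_1,\ldots,y_N\in R$, uniquely determined, with $y_k=x_k$ if $p(k)=-\infty$ and $y_k=y_{p(k)}x_k-c_k$ for some $c_k\in R_{k-1}$ otherwise, such that for every $k$ the set $\{y_j: j\le k,\ s(j)>k\}$ is, up to nonzero scalars, the set of homogeneous prime elements of $R_k$. The $y_i$ pairwise quasi-commute. *)

theory Defs
  imports Main
begin

definition K_algebra :: "('k::field \<Rightarrow> 'r::ring_1) \<Rightarrow> bool" where
  "K_algebra emb \<longleftrightarrow> emb 1 = 1 \<and> inj emb \<and>
     (\<forall>a b. emb (a + b) = emb a + emb b) \<and>
     (\<forall>a b. emb (a * b) = emb a * emb b) \<and>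
     (\<forall>c r. emb c * r = r * emb c)"

inductive_set gen_alg :: "('k \<Rightarrow> 'r::ring_1) \<Rightarrow> 'r set \<Rightarrow> 'r set"
  for emb :: "'k \<Rightarrow> 'r" and S :: "'r set" where
  base: "a \<in> S \<Longrightarrow> a \<in> gen_alg emb S"
| scal: "emb c \<in> gen_alg emb S"
| add:  "a \<in> gen_alg emb S \<Longrightarrow> b \<in> gen_alg emb S \<Longrightarrow> a + b \<in> gen_alg emb S"
| neg:  "a \<in> gen_alg emb S \<Longrightarrow> - a \<in> gen_alg emb S"
| mul:  "a \<in> gen_alg emb S \<Longrightarrow> b \<in> gen_alg emb S \<Longrightarrow> a * b \<in> gen_alg emb S"

definition Rk :: "('k \<Rightarrow> 'r::ring_1) \<Rightarrow> (nat \<Rightarrow> 'r) \<Rightarrow> nat \<Rightarrow> 'r set" where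
  "Rk emb x k = gen_alg emb (x ` {1..k})"

text \<open>R_k = R_{k-1}[x_k; sigma, delta]: sigma is a K-automorphism of R_{k-1},
  delta a K-linear sigma-derivation of R_{k-1}, x_k a = sigma(a) x_k + delta(a),
  and the powers of x_k are left-linearly independent over R_{k-1}
  (so R_k, which is generated by R_{k-1} and x_k, is the Ore extension).\<close>
definition ore_step ::
  "('k::field \<Rightarrow> 'r::ring_1) \<Rightarrow> (nat \<Rightarrow> 'r) \<Rightarrow> nat \<Rightarrow> ('r \<Rightarrow> 'r) \<Rightarrow> ('r \<Rightarrow> 'r) \<Rightarrow> bool" where
  "ore_step emb x k \<sigma> \<delta> \<longleftrightarrow>
     (let A = Rk emb x (k - 1) in
       \<sigma> ` A = A \<and> inj_on \<sigma> A \<and>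
       (\<forall>a\<in>A. \<forall>b\<in>A. \<sigma> (a + b) = \<sigma> a + \<sigma> b \<and> \<sigma> (a * b) = \<sigma> a * \<sigma> b) \<and>
       (\<forall>c. \<sigma> (emb c) = emb c) \<and>
       (\<forall>a\<in>A. \<delta> a \<in> A) \<and>
       (\<forall>a\<in>A. \<forall>b\<in>A. \<delta> (a + b) = \<delta> a + \<delta> b \<and> \<delta> (a * b) = \<sigma> a * \<delta> b + \<delta> a * b) \<and>
       (\<forall>c. \<delta> (emb c) = 0) \<and>
       (\<forall>a\<in>A. x k * a = \<sigma> a * x k + \<delta> a) \<and>
       (\<forall>(a :: nat \<Rightarrow> 'r) m. (\<forall>i\<le>m. a i \<in> A) \<and> (\<Sum>i\<le>m. a i * x k ^ i) = 0
            \<longrightarrow> (\<forall>i\<le>m. a i = 0)))"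

text \<open>The torus (K^*)^n, elements represented as functions nat => K, trivial beyond n.\<close>
definition torus :: "nat \<Rightarrow> (nat \<Rightarrow> 'k::field) set" where
  "torus n = {h. (\<forall>l<n. h l \<noteq> 0) \<and> (\<forall>l\<ge>n. h l = 1)}"

text \<open>A rational action of (K^*)^n by K-algebra automorphisms of R, with each generator
  x_i (1 <= i <= N) an eigenvector; since the x_i generate R, rationality amounts to
  the eigencharacters being rational characters h |-> prod_l h_l^(e_il).
  The action is faithful (H is identified with its image, "maximal" torus).\<close>
definition torus_action ::
  "('k::field \<Rightarrow> 'r::ring_1) \<Rightarrow> (nat \<Rightarrow> 'r) \<Rightarrow> nat \<Rightarrow> nat \<Rightarrow> ((nat \<Rightarrow> 'k) \<Rightarrow> 'r \<Rightarrow> 'r) \<Rightarrow> bool" where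
  "torus_action emb x N n act \<longleftrightarrow>
     (\<forall>h\<in>torus n. bij (act h) \<and> act h 1 = 1 \<and>
        (\<forall>a b. act h (a + b) = act h a + act h b \<and> act h (a * b) = act h a * act h b) \<and>
        (\<forall>c. act h (emb c) = emb c)) \<and>
     act (\<lambda>_. 1) = id \<and>
     (\<forall>h\<in>torus n. \<forall>h'\<in>torus n. act (\<lambda>l. h l * h' l) = act h \<circ> act h') \<and>
     (\<exists>e :: nat \<Rightarrow> nat \<Rightarrow> int. \<forall>i\<in>{1..N}. \<forall>h\<in>torus n.
          act h (x i) = emb (\<Prod>l<n. power_int (h l) (e i l)) * x i) \<and>
     (\<forall>h\<in>torus n. act h = id \<longrightarrow> h = (\<lambda>_. 1))"

definition homogeneous ::
  "('k::field \<Rightarrow> 'r::ring_1) \<Rightarrow> nat \<Rightarrow> ((nat \<Rightarrow> 'k) \<Rightarrow> 'r \<Rightarrow> 'r) \<Rightarrow> 'r \<Rightarrow> bool" where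
  "homogeneous emb n act u \<longleftrightarrow> u \<noteq> 0 \<and>
     (\<exists>\<chi> :: (nat \<Rightarrow> 'k) \<Rightarrow> 'k. \<forall>h\<in>torus n. act h u = emb (\<chi> h) * u)"

definition rank_of :: "nat \<Rightarrow> ('k \<Rightarrow> 'r::ring_1) \<Rightarrow> (nat \<Rightarrow> 'r) \<Rightarrow> (nat \<Rightarrow> 'r \<Rightarrow> 'r) \<Rightarrow> nat" where
  "rank_of N emb x \<delta> = card {k\<in>{1..N}. \<forall>a\<in>Rk emb x (k - 1). \<delta> k a = 0}"

definition QNA ::
  "('k::field \<Rightarrow> 'r::ring_1) \<Rightarrow> (nat \<Rightarrow> 'r) \<Rightarrow> nat \<Rightarrow> (nat \<Rightarrow> 'r \<Rightarrow> 'r) \<Rightarrow> (nat \<Rightarrow> 'r \<Rightarrow> 'r)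
     \<Rightarrow> nat \<Rightarrow> ((nat \<Rightarrow> 'k) \<Rightarrow> 'r \<Rightarrow> 'r) \<Rightarrow> bool" where
  "QNA emb x N \<sigma> \<delta> n act \<longleftrightarrow>
     K_algebra emb \<and>
     Rk emb x N = UNIV \<and>
     (\<forall>k\<in>{1..N}. ore_step emb x k (\<sigma> k) (\<delta> k)) \<and>
     (\<forall>k\<in>{1..N}. \<forall>j\<in>{1..<k}. \<exists>lam. lam \<noteq> 0 \<and> \<sigma> k (x j) = emb lam * x j) \<and>
     (\<forall>k\<in>{1..N}. \<forall>a\<in>Rk emb x (k - 1). \<exists>m. (\<delta> k ^^ m) a = 0) \<and>
     n = rank_of N emb x \<delta> \<and>
     torus_action emb x N n act \<and>
     (\<forall>k\<in>{1..N}. \<exists>h\<in>torus n. \<exists>q. (\<forall>m>0. q ^ m \<noteq> 1) \<and>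
         (\<forall>a\<in>Rk emb x (k - 1). act h a = \<sigma> k a) \<and> act h (x k) = emb q * x k)"

definition normal_in :: "'r::ring_1 set \<Rightarrow> 'r \<Rightarrow> bool" where
  "normal_in A u \<longleftrightarrow> u \<in> A \<and> {u * a |a. a \<in> A} = {a * u |a. a \<in> A}"

definition prime_elem_in :: "'r::ring_1 set \<Rightarrow> 'r \<Rightarrow> bool" where
  "prime_elem_in A p \<longleftrightarrow> p \<noteq> 0 \<and> normal_in A p \<and>
     (let P = {p * a |a. a \<in> A} in
        P \<noteq> A \<and> (\<forall>a\<in>A. \<forall>b\<in>A. a * b \<in> P \<longrightarrow> a \<in> P \<or> b \<in> P))"

text \<open>p(k) exists (i.e. p(k) <> -infinity)\<close>
definition has_pred :: "(nat \<Rightarrow> nat) \<Rightarrow> nat \<Rightarrow> bool" where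
  "has_pred \<mu> k \<longleftrightarrow> (\<exists>j. 1 \<le> j \<and> j < k \<and> \<mu> j = \<mu> k)"

definition pred_idx :: "(nat \<Rightarrow> nat) \<Rightarrow> nat \<Rightarrow> nat" where
  "pred_idx \<mu> k = (GREATEST j. 1 \<le> j \<and> j < k \<and> \<mu> j = \<mu> k)"

text \<open>s(j) > k\<close>
definition succ_gt :: "(nat \<Rightarrow> nat) \<Rightarrow> nat \<Rightarrow> nat \<Rightarrow> bool" where
  "succ_gt \<mu> j k \<longleftrightarrow> \<not> (\<exists>j'. j < j' \<and> j' \<le> k \<and> \<mu> j' = \<mu> j)"

definition GY_elements ::
  "('k::field \<Rightarrow> 'r::ring_1) \<Rightarrow> (nat \<Rightarrow> 'r) \<Rightarrow> nat \<Rightarrow> nat \<Rightarrow> ((nat \<Rightarrow> 'k) \<Rightarrow> 'r \<Rightarrow> 'r)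
     \<Rightarrow> (nat \<Rightarrow> nat) \<Rightarrow> (nat \<Rightarrow> 'r) \<Rightarrow> bool" where
  "GY_elements emb x N n act \<mu> y \<longleftrightarrow>
     \<mu> ` {1..N} = {1..n} \<and>
     (\<forall>k\<in>{1..N}. homogeneous emb n act (y k) \<and>
        (\<not> has_pred \<mu> k \<longrightarrow> y k = x k) \<and>
        (has_pred \<mu> k \<longrightarrow> (\<exists>c\<in>Rk emb x (k - 1). y k = y (pred_idx \<mu> k) * x k - c))) \<and>
     (\<forall>k\<in>{1..N}.
        (\<forall>j. 1 \<le> j \<and> j \<le> k \<and> succ_gt \<mu> j k \<longrightarrow>
            homogeneous emb n act (y j) \<and> prime_elem_in (Rk emb x k) (y j)) \<and>
        (\<forall>u. homogeneous emb n act u \<and> prime_elem_in (Rk emb x k) u \<longrightarrow>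
            (\<exists>j c. 1 \<le> j \<and> j \<le> k \<and> succ_gt \<mu> j k \<and> c \<noteq> 0 \<and> u = emb c * y j)))"

end

theory Submission
  imports Defs
begin

(* Write y_b = u x_b + v with u, v in R_(b-1) and u nonzero.  For a < b, a degree count in x_b
   shows that y_b does not divide y_a in R_b; as y_b is prime in R_b, y_a r = y_b s forces r into
   y_b R_b, and comparing coefficients of the powers of x_(m+1) lifts this through every Ore
   extension R_m < R_(m+1) up to R.  So y_a R meets y_b R exactly in y_a y_b R, because y_a and
   y_b commute up to a nonzero scalar of K; that quasi-commutation comes from normality of y_i in
   R_i together with the torus element acting on R_(i-1) as sigma_i. *)

lemma inter_right_ideals_eq_product:
  fixes a b c :: "'r::ring_1"
  assumes cofactor: "\<And>r s. a * r = b * s \<Longrightarrow> \<exists>t. r = b * t"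
    and quasi_comm: "a * b = c * (b * a)" and central: "\<And>z. c * z = z * c"
  shows "{a * r |r. True} \<inter> {b * r |r. True} = {a * b * r |r. True}"
proof (intro equalityI subsetI)
  fix z assume "z \<in> {a * r |r. True} \<inter> {b * r |r. True}"
  then obtain r s where "z = a * r" "a * r = b * s" by auto
  with cofactor obtain t where "z = a * (b * t)" by blast
  then show "z \<in> {a * b * r |r. True}" by (auto simp: mult.assoc)
next
  fix z assume "z \<in> {a * b * r |r. True}"
  then obtain t where t: "z = a * b * t" by auto
  then have "z = a * (b * t)" by (simp add: mult.assoc)
  moreover from t have "z = b * (c * a * t)"
    by (simp add: quasi_comm central mult.assoc flip: central[of "b * (a * t)"])
  ultimately show "z \<in> {a * r |r. True} \<inter> {b * r |r. True}" by blast
qed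

lemma product_right_ideal_swap:
  fixes a b c d :: "'r::ring_1"
  assumes "a * b = c * (b * a)" "b * a = d * (a * b)"
    and "\<And>z. c * z = z * c" "\<And>z. d * z = z * d"
  shows "{a * b * r |r. True} = {b * a * r |r. True}"
proof -
  have swap: "{p * q * r |r. True} \<subseteq> {q * p * r |r. True}"
    if "p * q = e * (q * p)" "\<And>z. e * z = z * e" for p q e :: 'r
  proof
    fix z assume "z \<in> {p * q * r |r. True}"
    then obtain t where "z = p * q * t" by auto
    then have "z = q * p * (e * t)" using that by (simp add: mult.assoc)
    then show "z \<in> {q * p * r |r. True}" by blast
  qed
  show ?thesis using swap[of a b c] swap[of b a d] assms by blast
qed

definition zero_divisor_free :: "'r::ring_1 set \<Rightarrow> bool" where
  "zero_divisor_free S \<longleftrightarrow> (\<forall>a\<in>S. \<forall>b\<in>S. a * b = 0 \<longrightarrow> a = 0 \<or> b = 0)"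

locale ore_extension =
  fixes A :: "'r::ring_1 set" and X :: 'r and \<sigma> \<delta> :: "'r \<Rightarrow> 'r"
  assumes zero_mem: "0 \<in> A" and one_mem: "1 \<in> A"
    and add_mem: "a \<in> A \<Longrightarrow> b \<in> A \<Longrightarrow> a + b \<in> A"
    and uminus_mem: "a \<in> A \<Longrightarrow> - a \<in> A"
    and mult_mem: "a \<in> A \<Longrightarrow> b \<in> A \<Longrightarrow> a * b \<in> A"
    and sigma_mem: "a \<in> A \<Longrightarrow> \<sigma> a \<in> A"
    and sigma_inj: "inj_on \<sigma> A"
    and sigma_add: "a \<in> A \<Longrightarrow> b \<in> A \<Longrightarrow> \<sigma> (a + b) = \<sigma> a + \<sigma> b"
    and delta_mem: "a \<in> A \<Longrightarrow> \<delta> a \<in> A"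
    and X_mult: "a \<in> A \<Longrightarrow> X * a = \<sigma> a * X + \<delta> a"
    and powers_independent:
      "\<And>c m. (\<forall>i\<le>m. c i \<in> A) \<Longrightarrow> (\<Sum>i\<le>m. c i * X ^ i) = 0 \<Longrightarrow> (\<forall>i\<le>m. c i = 0)"
begin

definition deg_less :: "nat \<Rightarrow> 'r set" where
  "deg_less m = {\<Sum>d<m. a d * X ^ d |a. \<forall>d<m. a d \<in> A}"

definition ore_ring :: "'r set" where
  "ore_ring = (\<Union>m. deg_less m)"

lemma diff_mem: "a \<in> A \<Longrightarrow> b \<in> A \<Longrightarrow> a - b \<in> A"
  using add_mem uminus_mem by (metis diff_conv_add_uminus)

lemma deg_lessI: "(\<And>d. d < m \<Longrightarrow> a d \<in> A) \<Longrightarrow> (\<Sum>d<m. a d * X ^ d) \<in> deg_less m"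
  unfolding deg_less_def by blast

lemma deg_lessE:
  assumes "r \<in> deg_less m"
  obtains a where "\<And>d. d < m \<Longrightarrow> a d \<in> A" "r = (\<Sum>d<m. a d * X ^ d)"
  using assms unfolding deg_less_def by blast

lemma deg_less_0 [simp]: "deg_less 0 = {0}"
  unfolding deg_less_def by auto

lemma zero_deg_less: "0 \<in> deg_less m"
  using deg_lessI[of m "\<lambda>_. 0"] zero_mem by simp

lemma add_deg_less: "r \<in> deg_less m \<Longrightarrow> s \<in> deg_less m \<Longrightarrow> r + s \<in> deg_less m"
  by (elim deg_lessE, hypsubst)
    (use deg_lessI[of m "\<lambda>d. _ d + _ d"] add_mem in \<open>auto simp: sum.distrib distrib_right\<close>)

lemma uminus_deg_less: "r \<in> deg_less m \<Longrightarrow> - r \<in> deg_less m"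
  by (elim deg_lessE, hypsubst)
    (use deg_lessI[of m "\<lambda>d. - _ d"] uminus_mem in \<open>auto simp: sum_negf\<close>)

lemma sum_deg_less:
  "finite S \<Longrightarrow> (\<And>d. d \<in> S \<Longrightarrow> f d \<in> deg_less m) \<Longrightarrow> sum f S \<in> deg_less m"
  by (induction S rule: finite_induct) (auto simp: zero_deg_less add_deg_less)

lemma monom_deg_less: "a \<in> A \<Longrightarrow> d < m \<Longrightarrow> a * X ^ d \<in> deg_less m"
  using deg_lessI[of m "\<lambda>e. if e = d then a else 0"] zero_mem
  by (simp add: if_distrib[of "\<lambda>c. c * _"] cong: if_cong)

lemma deg_less_mono: "r \<in> deg_less m \<Longrightarrow> m \<le> m' \<Longrightarrow> r \<in> deg_less m'"
  by (auto elim!: deg_lessE intro!: sum_deg_less monom_deg_less)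

lemma mem_deg_less_Suc: "a \<in> A \<Longrightarrow> a \<in> deg_less (Suc m)"
  using monom_deg_less[of a 0] by simp

lemma deg_less_1: "r \<in> deg_less (Suc 0) \<Longrightarrow> r \<in> A"
  by (auto elim: deg_lessE)

lemma mult_deg_less_left: "c \<in> A \<Longrightarrow> r \<in> deg_less m \<Longrightarrow> c * r \<in> deg_less m"
  by (auto elim!: deg_lessE simp: sum_distrib_left mult.assoc[symmetric]
      intro!: sum_deg_less monom_deg_less mult_mem)

lemma mult_Xpow_deg_less: "r \<in> deg_less m \<Longrightarrow> r * X ^ e \<in> deg_less (m + e)"
proof (elim deg_lessE)
  fix a assume a: "\<And>d. d < m \<Longrightarrow> a d \<in> A" and r: "r = (\<Sum>d<m. a d * X ^ d)"
  have "r * X ^ e = (\<Sum>d<m. a d * X ^ (d + e))"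
    by (simp add: r sum_distrib_right mult.assoc power_add)
  also have "\<dots> \<in> deg_less (m + e)" using a by (intro sum_deg_less monom_deg_less) auto
  finally show ?thesis .
qed

lemma X_mult_deg_less: "r \<in> deg_less m \<Longrightarrow> X * r \<in> deg_less (Suc m)"
proof (elim deg_lessE)
  fix a assume a: "\<And>d. d < m \<Longrightarrow> a d \<in> A" and r: "r = (\<Sum>d<m. a d * X ^ d)"
  have "X * r = (\<Sum>d<m. \<sigma> (a d) * X ^ Suc d + \<delta> (a d) * X ^ d)"
    unfolding r sum_distrib_left
    by (rule sum.cong) (auto simp: a X_mult distrib_right mult.assoc simp flip: mult.assoc[of X])
  also have "\<dots> \<in> deg_less (Suc m)"
    using a by (intro sum_deg_less add_deg_less monom_deg_less sigma_mem delta_mem) auto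
  finally show ?thesis .
qed

lemma Xpow_mult_deg_less: "r \<in> deg_less m \<Longrightarrow> X ^ e * r \<in> deg_less (e + m)"
  by (induction e) (auto simp: mult.assoc dest: X_mult_deg_less)

lemma funpow_sigma_mem: "b \<in> A \<Longrightarrow> (\<sigma> ^^ d) b \<in> A"
  by (induction d) (auto simp: sigma_mem)

lemma funpow_sigma_nonzero: "b \<in> A \<Longrightarrow> b \<noteq> 0 \<Longrightarrow> (\<sigma> ^^ d) b \<noteq> 0"
proof (induction d)
  case (Suc d)
  have "\<sigma> 0 = 0" using sigma_add[OF zero_mem zero_mem] by simp
  then show ?case
    using Suc funpow_sigma_mem[of b d] inj_onD[OF sigma_inj, of "(\<sigma> ^^ d) b" 0] zero_mem by auto
qed simp

lemma Xpow_mult: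
  assumes "b \<in> A"
  obtains L where "L \<in> deg_less d" "X ^ d * b = (\<sigma> ^^ d) b * X ^ d + L"
proof (induction d arbitrary: thesis)
  case 0
  then show ?case using zero_deg_less by force
next
  case (Suc d)
  obtain L where L: "L \<in> deg_less d" "X ^ d * b = (\<sigma> ^^ d) b * X ^ d + L"
    using Suc.IH by blast
  have b': "(\<sigma> ^^ d) b \<in> A" using assms funpow_sigma_mem by blast
  have "X ^ Suc d * b = X * (X ^ d * b)" by (simp add: mult.assoc)
  also have "\<dots> = (X * (\<sigma> ^^ d) b) * X ^ d + X * L" by (simp add: L(2) algebra_simps)
  also have "\<dots> = (\<sigma> ^^ Suc d) b * X ^ Suc d + (\<delta> ((\<sigma> ^^ d) b) * X ^ d + X * L)"
    by (simp add: X_mult[OF b'] algebra_simps)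
  finally have "X ^ Suc d * b = (\<sigma> ^^ Suc d) b * X ^ Suc d + (\<delta> ((\<sigma> ^^ d) b) * X ^ d + X * L)" .
  moreover have "\<delta> ((\<sigma> ^^ d) b) * X ^ d + X * L \<in> deg_less (Suc d)"
    using L(1) b' by (intro add_deg_less monom_deg_less delta_mem X_mult_deg_less) auto
  ultimately show ?case using Suc.prems by blast
qed

lemma mult_deg_less_right: "r \<in> deg_less m \<Longrightarrow> b \<in> A \<Longrightarrow> r * b \<in> deg_less m"
proof (elim deg_lessE)
  fix a assume b: "b \<in> A" and a: "\<And>d. d < m \<Longrightarrow> a d \<in> A" and r: "r = (\<Sum>d<m. a d * X ^ d)"
  have "a d * (X ^ d * b) \<in> deg_less m" if "d < m" for d
  proof -
    obtain L where "L \<in> deg_less d" "X ^ d * b = (\<sigma> ^^ d) b * X ^ d + L"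
      using Xpow_mult[OF b] .
    then show ?thesis using that a b
      by (auto intro!: mult_deg_less_left add_deg_less monom_deg_less funpow_sigma_mem
          elim: deg_less_mono)
  qed
  then show ?thesis
    unfolding r sum_distrib_right by (auto simp: mult.assoc intro!: sum_deg_less)
qed

lemma mult_deg_less: "r \<in> deg_less m \<Longrightarrow> s \<in> deg_less n \<Longrightarrow> r * s \<in> deg_less (m + n)"
proof (elim deg_lessE[of s])
  fix b assume r: "r \<in> deg_less m" and b: "\<And>d. d < n \<Longrightarrow> b d \<in> A"
    and s: "s = (\<Sum>d<n. b d * X ^ d)"
  have "r * b d * X ^ d \<in> deg_less (m + n)" if "d < n" for d
    using mult_Xpow_deg_less[OF mult_deg_less_right[OF r b[OF that]], of d] that
    by (auto elim: deg_less_mono)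
  then show ?thesis
    unfolding s sum_distrib_left by (auto simp: mult.assoc intro!: sum_deg_less)
qed

lemma coeffs_unique:
  assumes "\<And>d. d < M \<Longrightarrow> a d \<in> A" "\<And>d. d < M \<Longrightarrow> b d \<in> A"
    and "(\<Sum>d<M. a d * X ^ d) = (\<Sum>d<M. b d * X ^ d)" and "d < M"
  shows "a d = b d"
proof -
  have M: "{..<M} = {..M - 1}" using \<open>d < M\<close> by auto
  have "(\<Sum>i<M. (a i - b i) * X ^ i) = 0"
    using assms(3) by (simp add: left_diff_distrib sum_subtractf)
  then have sum: "(\<Sum>i\<le>M - 1. (a i - b i) * X ^ i) = 0" by (simp only: M)
  have mem: "\<forall>i\<le>M - 1. a i - b i \<in> A" using assms(1,2) M by (auto intro: diff_mem)
  show ?thesis using powers_independent[OF mem sum] \<open>d < M\<close> by simp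
qed

lemma linear_coeffs_unique:
  assumes "p \<in> A" "q \<in> A" "r \<in> A" "s \<in> A" "p * X + q = r * X + s"
  shows "p = r"
  using coeffs_unique[of 2 "\<lambda>d. if d = 0 then q else p" "\<lambda>d. if d = 0 then s else r" 1] assms
  by (simp add: numeral_2_eq_2 add.commute)

lemma leading_coeff_eq_0:
  assumes "a \<in> A" "L \<in> deg_less m" "a * X ^ m + L \<in> deg_less m"
  shows "a = 0"
proof -
  obtain l where l: "\<And>d. d < m \<Longrightarrow> l d \<in> A" "L = (\<Sum>d<m. l d * X ^ d)"
    using assms(2) by (metis deg_lessE)
  obtain l' where l': "\<And>d. d < m \<Longrightarrow> l' d \<in> A" "a * X ^ m + L = (\<Sum>d<m. l' d * X ^ d)"
    using assms(3) by (metis deg_lessE)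
  have "(\<Sum>d<Suc m. (l(m := a)) d * X ^ d) = (\<Sum>d<Suc m. (l'(m := 0)) d * X ^ d)"
    by (simp add: l(2) l'(2)[symmetric] add.commute)
  then have "(l(m := a)) m = (l'(m := 0)) m"
    by (rule coeffs_unique[rotated 2]) (use l l' assms(1) zero_mem in \<open>auto simp: less_Suc_eq\<close>)
  then show ?thesis by simp
qed

lemma deg_less_SucE:
  assumes "r \<in> deg_less (Suc m)"
  obtains a L where "a \<in> A" "L \<in> deg_less m" "r = a * X ^ m + L"
proof -
  obtain a where a: "\<And>d. d < Suc m \<Longrightarrow> a d \<in> A" "r = (\<Sum>d<Suc m. a d * X ^ d)"
    using assms by (metis deg_lessE)
  then have "(\<Sum>d<m. a d * X ^ d) \<in> deg_less m" by (auto intro: deg_lessI)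
  then show thesis using a by (intro that[of "a m" "\<Sum>d<m. a d * X ^ d"]) auto
qed

lemma leading_term:
  assumes "r \<in> deg_less M" "r \<noteq> 0"
  obtains m a L where "a \<in> A" "a \<noteq> 0" "L \<in> deg_less m" "r = a * X ^ m + L"
proof -
  have "\<exists>m a L. a \<in> A \<and> a \<noteq> 0 \<and> L \<in> deg_less m \<and> r = a * X ^ m + L"
    using assms
  proof (induction M arbitrary: r)
    case (Suc M)
    obtain a L where aL: "a \<in> A" "L \<in> deg_less M" "r = a * X ^ M + L"
      using Suc.prems(1) by (rule deg_less_SucE)
    show ?case
    proof (cases "a = 0")
      case True
      then show ?thesis using Suc.IH[of L] aL Suc.prems(2) by simp
    qed (use aL in blast)
  qed simp
  then show thesis using that by blast
qed

lemma mult_leading_terms: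
  assumes a: "a \<in> A" and b: "b \<in> A" and L1: "L1 \<in> deg_less m" and L2: "L2 \<in> deg_less n"
  obtains L where "L \<in> deg_less (m + n)"
    "(a * X ^ m + L1) * (b * X ^ n + L2) = a * (\<sigma> ^^ m) b * X ^ (m + n) + L"
proof -
  obtain L where L: "L \<in> deg_less m" "X ^ m * b = (\<sigma> ^^ m) b * X ^ m + L"
    using Xpow_mult[OF b] .
  have "(a * X ^ m + L1) * (b * X ^ n + L2)
      = a * (X ^ m * b) * X ^ n + a * (X ^ m * L2) + L1 * b * X ^ n + L1 * L2"
    by (simp add: algebra_simps)
  also have "\<dots> = a * (\<sigma> ^^ m) b * X ^ (m + n)
      + (a * L * X ^ n + a * (X ^ m * L2) + L1 * b * X ^ n + L1 * L2)"
    by (simp add: L(2) algebra_simps power_add)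
  finally have "(a * X ^ m + L1) * (b * X ^ n + L2) = a * (\<sigma> ^^ m) b * X ^ (m + n)
      + (a * L * X ^ n + a * (X ^ m * L2) + L1 * b * X ^ n + L1 * L2)" .
  moreover have "a * L * X ^ n + a * (X ^ m * L2) + L1 * b * X ^ n + L1 * L2 \<in> deg_less (m + n)"
    using a b L(1) L1 L2
    by (intro add_deg_less mult_Xpow_deg_less mult_deg_less_left Xpow_mult_deg_less
        mult_deg_less_right mult_deg_less) (auto simp: add.commute)
  ultimately show thesis by (rule that[rotated])
qed

lemma ore_ringI: "r \<in> deg_less m \<Longrightarrow> r \<in> ore_ring"
  unfolding ore_ring_def by blast

lemma ore_ring_common_bound:
  assumes "r \<in> ore_ring" "s \<in> ore_ring"
  obtains M where "r \<in> deg_less M" "s \<in> deg_less M"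
proof -
  obtain m m' where "r \<in> deg_less m" "s \<in> deg_less m'"
    using assms unfolding ore_ring_def by blast
  then show thesis by (intro that[of "max m m'"]) (auto elim: deg_less_mono)
qed

lemma mem_ore_ring: "a \<in> A \<Longrightarrow> a \<in> ore_ring"
  using ore_ringI[OF mem_deg_less_Suc] .

lemma X_mem_ore_ring: "X \<in> ore_ring"
  using ore_ringI[OF monom_deg_less[OF one_mem, of 1 2]] by simp

lemma add_mem_ore_ring: "r \<in> ore_ring \<Longrightarrow> s \<in> ore_ring \<Longrightarrow> r + s \<in> ore_ring"
  by (metis ore_ring_common_bound ore_ringI add_deg_less)

lemma uminus_mem_ore_ring: "r \<in> ore_ring \<Longrightarrow> - r \<in> ore_ring"
  unfolding ore_ring_def by (blast intro: uminus_deg_less)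

lemma mult_mem_ore_ring: "r \<in> ore_ring \<Longrightarrow> s \<in> ore_ring \<Longrightarrow> r * s \<in> ore_ring"
  unfolding ore_ring_def by (blast intro: mult_deg_less)

text \<open>Leading coefficients multiply up to the twist \<open>\<sigma>\<^sup>m\<close>, which is injective.\<close>

lemma zero_divisor_free_ore_ring:
  assumes "zero_divisor_free A"
  shows "zero_divisor_free ore_ring"
  unfolding zero_divisor_free_def
proof (intro ballI impI, rule ccontr)
  fix r s assume "r \<in> ore_ring" "s \<in> ore_ring" "r * s = 0" "\<not> (r = 0 \<or> s = 0)"
  then obtain M where "r \<in> deg_less M" "s \<in> deg_less M" "r \<noteq> 0" "s \<noteq> 0"
    by (metis ore_ring_common_bound)
  then obtain m a L1 n b L2 where
    r: "a \<in> A" "a \<noteq> 0" "L1 \<in> deg_less m" "r = a * X ^ m + L1" and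
    s: "b \<in> A" "b \<noteq> 0" "L2 \<in> deg_less n" "s = b * X ^ n + L2"
    by (metis leading_term)
  obtain L where L: "L \<in> deg_less (m + n)" "r * s = a * (\<sigma> ^^ m) b * X ^ (m + n) + L"
    using mult_leading_terms[OF r(1) s(1) r(3) s(3)] r(4) s(4) by blast
  have "a * (\<sigma> ^^ m) b * X ^ (m + n) + L \<in> deg_less (m + n)"
    unfolding L(2)[symmetric] \<open>r * s = 0\<close> by (rule zero_deg_less)
  then have "a * (\<sigma> ^^ m) b = 0"
    using leading_coeff_eq_0 L(1) r(1) s(1) by (blast intro: mult_mem funpow_sigma_mem)
  moreover have "(\<sigma> ^^ m) b \<in> A" "(\<sigma> ^^ m) b \<noteq> 0"
    using s(1,2) funpow_sigma_mem funpow_sigma_nonzero by blast+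
  ultimately show False using assms r(1,2) unfolding zero_divisor_free_def by blast
qed

lemma deg_less_of_mult_linear:
  assumes "zero_divisor_free A" and u: "u \<in> A" "u \<noteq> 0" and v: "v \<in> A"
    and t: "t \<in> ore_ring" and deg: "(u * X + v) * t \<in> deg_less (Suc M)"
  shows "t \<in> deg_less M"
proof (cases "t = 0")
  case False
  obtain M' where "t \<in> deg_less M'" using t unfolding ore_ring_def by blast
  then obtain m a L where aL: "a \<in> A" "a \<noteq> 0" "L \<in> deg_less m" "t = a * X ^ m + L"
    using False by (rule leading_term)
  show ?thesis
  proof (cases "m < M")
    case True
    then show ?thesis
      using aL deg_less_mono[of L m M] by (auto intro!: add_deg_less monom_deg_less)
  next
    case False
    obtain L' where L': "L' \<in> deg_less (Suc 0 + m)" "(u * X ^ Suc 0 + v) * (a * X ^ m + L)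
        = u * (\<sigma> ^^ Suc 0) a * X ^ (Suc 0 + m) + L'"
      using mult_leading_terms[OF u(1) aL(1) mem_deg_less_Suc[OF v, of 0] aL(3)] .
    have "u * (\<sigma> ^^ Suc 0) a * X ^ (Suc 0 + m) + L' \<in> deg_less (Suc 0 + m)"
      using deg L' aL(4) False deg_less_mono[of _ "Suc M" "Suc m"] by auto
    then have "u * \<sigma> a = 0"
      using leading_coeff_eq_0[OF _ L'(1)] u(1) aL(1) by (simp add: mult_mem sigma_mem)
    moreover have "\<sigma> a \<in> A" "\<sigma> a \<noteq> 0"
      using aL(1,2) sigma_mem funpow_sigma_nonzero[of a 1] by auto
    ultimately show ?thesis using assms(1) u unfolding zero_divisor_free_def by blast
  qed
qed (simp add: zero_deg_less)

text \<open>As \<open>a\<close> and \<open>b\<close> lie in \<open>A\<close> and act from the left, \<open>a r = b s\<close> can be compared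
  coefficientwise.\<close>

lemma cofactor_divisibility_lifts:
  assumes a: "a \<in> A" and b: "b \<in> A"
    and divides: "\<And>r s. r \<in> A \<Longrightarrow> s \<in> A \<Longrightarrow> a * r = b * s \<Longrightarrow> \<exists>t\<in>A. r = b * t"
    and "r \<in> ore_ring" "s \<in> ore_ring" and eq: "a * r = b * s"
  shows "\<exists>t\<in>ore_ring. r = b * t"
proof -
  obtain M where "r \<in> deg_less M" "s \<in> deg_less M"
    using ore_ring_common_bound \<open>r \<in> ore_ring\<close> \<open>s \<in> ore_ring\<close> .
  obtain p where p: "\<And>d. d < M \<Longrightarrow> p d \<in> A" "r = (\<Sum>d<M. p d * X ^ d)"
    using deg_lessE[OF \<open>r \<in> deg_less M\<close>] by blast
  obtain q where q: "\<And>d. d < M \<Longrightarrow> q d \<in> A" "s = (\<Sum>d<M. q d * X ^ d)"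
    using deg_lessE[OF \<open>s \<in> deg_less M\<close>] by blast
  have "(\<Sum>d<M. (a * p d) * X ^ d) = (\<Sum>d<M. (b * q d) * X ^ d)"
    using eq unfolding p(2) q(2) by (simp add: sum_distrib_left mult.assoc)
  then have coeff_eq: "a * p d = b * q d" if "d < M" for d
    using coeffs_unique[of M "\<lambda>d. a * p d" "\<lambda>d. b * q d", OF _ _ _ that] a b p(1) q(1)
    by (simp add: mult_mem)
  have "\<exists>t. d < M \<longrightarrow> t \<in> A \<and> p d = b * t" for d
    using divides[OF p(1) q(1) coeff_eq, of d] by auto
  then obtain t where t: "\<And>d. d < M \<Longrightarrow> t d \<in> A \<and> p d = b * t d"
    by metis
  have "r = b * (\<Sum>d<M. t d * X ^ d)"
    unfolding p(2) sum_distrib_left by (rule sum.cong) (simp_all add: mult.assoc t)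
  moreover have "(\<Sum>d<M. t d * X ^ d) \<in> ore_ring"
    using t by (intro ore_ringI[of _ M] deg_lessI) blast
  ultimately show ?thesis by blast
qed

end

locale scalar_embedding =
  fixes emb :: "'k::field \<Rightarrow> 'r::ring_1"
  assumes K_algebra: "K_algebra emb"
begin

lemma emb_1 [simp]: "emb 1 = 1"
  and emb_add: "emb (a + b) = emb a + emb b"
  and emb_mult: "emb (a * b) = emb a * emb b"
  and emb_commute: "emb c * r = r * emb c"
  using K_algebra unfolding K_algebra_def by blast+

lemma emb_0 [simp]: "emb 0 = 0"
  using emb_add[of 0 0] by simp

lemma mult_emb_left_commute: "a * (emb c * b) = emb c * (a * b)"
  by (metis emb_commute mult.assoc)

lemma emb_inverse_cancel: "c \<noteq> 0 \<Longrightarrow> emb (inverse c) * (emb c * r) = r"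
  by (simp flip: mult.assoc emb_mult)

lemma emb_uminus: "emb (- c) = - emb c"
  using minus_unique[of "emb c" "emb (- c)"] emb_add[of c "- c"] by simp

lemma emb_mult_eq_0_iff [simp]: "emb c * r = 0 \<longleftrightarrow> c = 0 \<or> r = 0"
proof (cases "c = 0")
  case False
  then show ?thesis using emb_inverse_cancel[OF False, of r] by auto
qed simp

lemma quasi_commute_sym:
  assumes "l \<noteq> 0" "a * b = emb l * (b * a)"
  shows "b * a = emb (inverse l) * (a * b)"
  using assms emb_inverse_cancel by simp

lemma zero_mem_gen_alg: "0 \<in> gen_alg emb S"
  using gen_alg.scal[of emb 0] by simp

lemma one_mem_gen_alg: "1 \<in> gen_alg emb S"
  using gen_alg.scal[of emb 1] by simp

lemma power_mem_gen_alg: "a \<in> gen_alg emb S \<Longrightarrow> a ^ d \<in> gen_alg emb S"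
  by (induction d) (auto intro: gen_alg.mul one_mem_gen_alg)

lemma sum_mem_gen_alg:
  "finite I \<Longrightarrow> (\<And>d. d \<in> I \<Longrightarrow> f d \<in> gen_alg emb S) \<Longrightarrow> sum f I \<in> gen_alg emb S"
  by (induction I rule: finite_induct) (auto intro: gen_alg.add zero_mem_gen_alg)

lemma gen_alg_empty: "gen_alg emb {} = range emb"
proof
  show "gen_alg emb {} \<subseteq> range emb"
  proof
    fix r assume "r \<in> gen_alg emb {}"
    then show "r \<in> range emb"
      by (induction rule: gen_alg.induct) (auto simp flip: emb_add emb_mult emb_uminus)
  qed
qed (auto intro: gen_alg.scal)

lemma zero_divisor_free_gen_alg_empty: "zero_divisor_free (gen_alg emb {})"
  unfolding zero_divisor_free_def gen_alg_empty by auto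

end

lemma gen_alg_mono: "a \<in> gen_alg emb S \<Longrightarrow> S \<subseteq> T \<Longrightarrow> a \<in> gen_alg emb T"
  by (induction rule: gen_alg.induct) (auto intro: gen_alg.intros)

lemma Rk_mono: "k \<le> k' \<Longrightarrow> Rk emb x k \<subseteq> Rk emb x k'"
  unfolding Rk_def by (auto elim!: gen_alg_mono)

lemma x_mem_Rk: "1 \<le> i \<Longrightarrow> i \<le> k \<Longrightarrow> x i \<in> Rk emb x k"
  unfolding Rk_def by (auto intro: gen_alg.base)

locale qna =
  fixes emb :: "'k::field \<Rightarrow> 'r::ring_1" and x :: "nat \<Rightarrow> 'r" and N n :: nat
    and \<sigma> \<delta> :: "nat \<Rightarrow> 'r \<Rightarrow> 'r" and act :: "(nat \<Rightarrow> 'k) \<Rightarrow> 'r \<Rightarrow> 'r"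
  assumes QNA: "QNA emb x N \<sigma> \<delta> n act"

sublocale qna \<subseteq> scalar_embedding emb
  using QNA unfolding QNA_def by unfold_locales blast

context qna
begin

lemma zero_mem_Rk: "0 \<in> Rk emb x k"
  and one_mem_Rk: "1 \<in> Rk emb x k"
  and emb_mem_Rk: "emb c \<in> Rk emb x k"
  and add_mem_Rk: "a \<in> Rk emb x k \<Longrightarrow> b \<in> Rk emb x k \<Longrightarrow> a + b \<in> Rk emb x k"
  and uminus_mem_Rk: "a \<in> Rk emb x k \<Longrightarrow> - a \<in> Rk emb x k"
  and mult_mem_Rk: "a \<in> Rk emb x k \<Longrightarrow> b \<in> Rk emb x k \<Longrightarrow> a * b \<in> Rk emb x k"
  unfolding Rk_def by (auto intro: zero_mem_gen_alg one_mem_gen_alg gen_alg.intros)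

lemma ore_extension_Rk:
  assumes "k \<in> {1..N}"
  shows "ore_extension (Rk emb x (k - 1)) (x k) (\<sigma> k) (\<delta> k)"
proof -
  let ?A = "Rk emb x (k - 1)"
  have "ore_step emb x k (\<sigma> k) (\<delta> k)" using QNA assms unfolding QNA_def by blast
  then have sigma: "\<sigma> k ` ?A = ?A" "inj_on (\<sigma> k) ?A"
      "\<And>a b. a \<in> ?A \<Longrightarrow> b \<in> ?A \<Longrightarrow> \<sigma> k (a + b) = \<sigma> k a + \<sigma> k b"
    and delta: "\<And>a. a \<in> ?A \<Longrightarrow> \<delta> k a \<in> ?A"
    and commute: "\<And>a. a \<in> ?A \<Longrightarrow> x k * a = \<sigma> k a * x k + \<delta> k a"
    and independent: "\<And>c m. \<forall>i\<le>m. c i \<in> ?A \<Longrightarrow> (\<Sum>i\<le>m. c i * x k ^ i) = 0 \<Longrightarrow> \<forall>i\<le>m. c i = 0"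
    unfolding ore_step_def Let_def by simp_all
  show ?thesis
    by unfold_locales (use equalityD1[OF sigma(1)] sigma(2,3) delta commute independent in
        \<open>simp_all add: zero_mem_Rk one_mem_Rk add_mem_Rk uminus_mem_Rk mult_mem_Rk image_subset_iff\<close>)
qed

lemma Rk_eq_ore_ring:
  assumes k: "k \<in> {1..N}"
  shows "Rk emb x k = ore_extension.ore_ring (Rk emb x (k - 1)) (x k)"
proof -
  interpret ore_extension "Rk emb x (k - 1)" "x k" "\<sigma> k" "\<delta> k"
    using ore_extension_Rk[OF k] .
  have "{1..k} = insert k {1..k - 1}" using k by auto
  then have gens: "x ` {1..k} = insert (x k) (x ` {1..k - 1})" by simp
  show ?thesis
  proof
    show "Rk emb x k \<subseteq> ore_ring"
    proof
      fix r assume "r \<in> Rk emb x k"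
      then have "r \<in> gen_alg emb (insert (x k) (x ` {1..k - 1}))" unfolding Rk_def gens .
      then show "r \<in> ore_ring"
      proof (induction rule: gen_alg.induct)
        case (base a)
        then show ?case using X_mem_ore_ring mem_ore_ring x_mem_Rk[of _ "k - 1" x emb] by auto
      qed (blast intro: mem_ore_ring emb_mem_Rk add_mem_ore_ring uminus_mem_ore_ring mult_mem_ore_ring)+
    qed
    show "ore_ring \<subseteq> Rk emb x k"
    proof
      fix r assume "r \<in> ore_ring"
      then obtain M a where a: "\<And>d. d < M \<Longrightarrow> a d \<in> Rk emb x (k - 1)"
        and r: "r = (\<Sum>d<M. a d * x k ^ d)"
        unfolding ore_ring_def by (blast elim: deg_lessE)
      have "a d \<in> Rk emb x k" if "d < M" for d
        using a[OF that] Rk_mono[of "k - 1" k] by auto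
      moreover have "x k \<in> Rk emb x k" using k by (auto intro: x_mem_Rk)
      ultimately show "r \<in> Rk emb x k"
        unfolding r Rk_def by (auto intro!: sum_mem_gen_alg gen_alg.mul power_mem_gen_alg)
    qed
  qed
qed

lemma zero_divisor_free_Rk: "k \<le> N \<Longrightarrow> zero_divisor_free (Rk emb x k)"
proof (induction k)
  case 0
  then show ?case using zero_divisor_free_gen_alg_empty by (simp add: Rk_def)
next
  case (Suc k)
  then have k: "Suc k \<in> {1..N}" by simp
  interpret ore_extension "Rk emb x k" "x (Suc k)" "\<sigma> (Suc k)" "\<delta> (Suc k)"
    using ore_extension_Rk[OF k] by simp
  have "zero_divisor_free (Rk emb x k)" using Suc by simp
  then show ?case using Rk_eq_ore_ring[OF k] zero_divisor_free_ore_ring by simp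
qed

lemma Rk_N: "Rk emb x N = UNIV"
  using QNA unfolding QNA_def by blast

lemma no_zero_divisors: "a * b = 0 \<Longrightarrow> a = 0 \<or> (b :: 'r) = 0"
  using zero_divisor_free_Rk[OF order_refl] unfolding Rk_N zero_divisor_free_def by blast

lemma torus_action: "torus_action emb x N n act"
  using QNA unfolding QNA_def by blast

lemma torus_element_acting_as_sigma:
  "k \<in> {1..N} \<Longrightarrow> \<exists>h\<in>torus n. \<forall>a\<in>Rk emb x (k - 1). act h a = \<sigma> k a"
  using QNA unfolding QNA_def by blast

lemma act_mult: "h \<in> torus n \<Longrightarrow> act h (a * b) = act h a * act h b"
  and act_add: "h \<in> torus n \<Longrightarrow> act h (a + b) = act h a + act h b"
  and act_inj: "h \<in> torus n \<Longrightarrow> inj (act h)"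
  using torus_action unfolding torus_action_def by (blast dest: bij_is_inj)+

lemma act_0: "h \<in> torus n \<Longrightarrow> act h 0 = 0"
  using act_add[of h 0 0] by simp

lemma homogeneous_eigenvalue:
  assumes "homogeneous emb n act u" "h \<in> torus n"
  obtains c where "c \<noteq> 0" "act h u = emb c * u"
proof -
  obtain \<chi> where \<chi>: "act h u = emb (\<chi> h) * u"
    using assms unfolding homogeneous_def by blast
  have "\<chi> h \<noteq> 0"
    using \<chi> assms act_0 act_inj unfolding homogeneous_def by (metis emb_0 injD mult_zero_left)
  then show thesis using \<chi> by (rule that)
qed

end

lemma pred_idx_bounds:
  assumes "has_pred \<mu> k"
  shows "1 \<le> pred_idx \<mu> k" "pred_idx \<mu> k < k"
proof -
  obtain j where j: "1 \<le> j \<and> j < k \<and> \<mu> j = \<mu> k" using assms unfolding has_pred_def by blast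
  have "1 \<le> pred_idx \<mu> k \<and> pred_idx \<mu> k < k \<and> \<mu> (pred_idx \<mu> k) = \<mu> k"
    unfolding pred_idx_def by (rule GreatestI_nat[of _ j k]) (use j in auto)
  then show "1 \<le> pred_idx \<mu> k" "pred_idx \<mu> k < k" by auto
qed

locale qna_gy = qna +
  fixes \<mu> :: "nat \<Rightarrow> nat" and y
  assumes GY: "GY_elements emb x N n act \<mu> y"
begin

text \<open>Since \<open>s(k) > k\<close>, the element \<open>y\<^sub>k\<close> is itself one of the homogeneous primes of \<open>R\<^sub>k\<close>.\<close>

lemma prime_y: "k \<in> {1..N} \<Longrightarrow> prime_elem_in (Rk emb x k) (y k)"
  and homogeneous_y: "k \<in> {1..N} \<Longrightarrow> homogeneous emb n act (y k)"
  using GY unfolding GY_elements_def succ_gt_def by auto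

lemma y_nonzero: "k \<in> {1..N} \<Longrightarrow> y k \<noteq> 0"
  using prime_y unfolding prime_elem_in_def by blast

lemma y_mem_Rk: "k \<in> {1..N} \<Longrightarrow> k \<le> m \<Longrightarrow> y k \<in> Rk emb x m"
  using prime_y Rk_mono unfolding prime_elem_in_def normal_in_def by blast

lemma y_linear_in_x:
  assumes k: "k \<in> {1..N}"
  obtains u v where "u \<in> Rk emb x (k - 1)" "v \<in> Rk emb x (k - 1)" "u \<noteq> 0" "y k = u * x k + v"
    "\<not> has_pred \<mu> k \<and> u = 1 \<or> has_pred \<mu> k \<and> u = y (pred_idx \<mu> k)"
proof (cases "has_pred \<mu> k")
  case False
  then have "y k = 1 * x k + 0" using GY k unfolding GY_elements_def by simp
  with False show thesis using that one_mem_Rk zero_mem_Rk by simp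
next
  case True
  then obtain c where c: "c \<in> Rk emb x (k - 1)" "y k = y (pred_idx \<mu> k) * x k - c"
    using GY k unfolding GY_elements_def by blast
  have "pred_idx \<mu> k \<in> {1..N}" "pred_idx \<mu> k \<le> k - 1"
    using pred_idx_bounds[OF True] k by auto
  with True c show thesis
    using that[of "y (pred_idx \<mu> k)" "- c"] y_mem_Rk y_nonzero uminus_mem_Rk by simp
qed

text \<open>Writing \<open>y\<^sub>b = u x\<^sub>b + v\<close> with \<open>u \<noteq> 0\<close>, any multiple \<open>y\<^sub>b t\<close> with \<open>t \<noteq> 0\<close> has positive degree
  in \<open>x\<^sub>b\<close>, while \<open>y\<^sub>a \<in> R\<^sub>b\<^sub>-\<^sub>1\<close> has degree zero.\<close>

lemma y_not_multiple_of_later_y: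
  assumes a: "a \<in> {1..N}" and b: "b \<in> {1..N}" and "a < b"
  shows "y a \<notin> {y b * t |t. t \<in> Rk emb x b}"
proof
  assume "y a \<in> {y b * t |t. t \<in> Rk emb x b}"
  then obtain t where t: "t \<in> Rk emb x b" "y a = y b * t" by blast
  interpret ore_extension "Rk emb x (b - 1)" "x b" "\<sigma> b" "\<delta> b"
    using ore_extension_Rk[OF b] .
  obtain u v where uv: "u \<in> Rk emb x (b - 1)" "v \<in> Rk emb x (b - 1)" "u \<noteq> 0" "y b = u * x b + v"
    using y_linear_in_x[OF b] by blast
  have "y a \<in> Rk emb x (b - 1)" using y_mem_Rk[OF a] \<open>a < b\<close> by simp
  then have deg: "(u * x b + v) * t \<in> deg_less (Suc 0)" using mem_deg_less_Suc t(2) uv(4) by simp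
  have "t \<in> ore_ring" using t Rk_eq_ore_ring[OF b] by simp
  moreover have "zero_divisor_free (Rk emb x (b - 1))" using b by (intro zero_divisor_free_Rk) auto
  ultimately have "t \<in> deg_less 0" using deg_less_of_mult_linear uv(1-3) deg by blast
  then have "t = 0" using deg_less_0 by blast
  then show False using t(2) y_nonzero[OF a] by simp
qed

text \<open>At level \<open>b\<close> this is primality of \<open>y\<^sub>b\<close> in \<open>R\<^sub>b\<close>; it then lifts through the Ore extensions
  \<open>R\<^sub>m \<subseteq> R\<^sub>m\<^sub>+\<^sub>1\<close> for \<open>m \<ge> b\<close>, in which \<open>y\<^sub>a\<close> and \<open>y\<^sub>b\<close> are coefficients.\<close>

lemma y_cofactor_divisible:
  assumes a: "a \<in> {1..N}" and b: "b \<in> {1..N}" and "a < b" and eq: "y a * r = y b * s"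
  shows "\<exists>t. r = y b * t"
proof -
  have "\<forall>r\<in>Rk emb x m. \<forall>s\<in>Rk emb x m. y a * r = y b * s \<longrightarrow> (\<exists>t\<in>Rk emb x m. r = y b * t)"
    if "b \<le> m" "m \<le> N" for m
    using that
  proof (induction m rule: dec_induct)
    case base
    have "y a \<in> Rk emb x b" using y_mem_Rk[OF a] \<open>a < b\<close> by simp
    then show ?case
      using prime_y[OF b] y_not_multiple_of_later_y[OF a b \<open>a < b\<close>]
      unfolding prime_elem_in_def Let_def by blast
  next
    case (step m)
    then have m: "Suc m \<in> {1..N}" by simp
    interpret ore_extension "Rk emb x m" "x (Suc m)" "\<sigma> (Suc m)" "\<delta> (Suc m)"
      using ore_extension_Rk[OF m] by simp
    have ya: "y a \<in> Rk emb x m" and yb: "y b \<in> Rk emb x m"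
      using y_mem_Rk a b step(1) \<open>a < b\<close> by auto
    have IH: "\<And>r s. r \<in> Rk emb x m \<Longrightarrow> s \<in> Rk emb x m \<Longrightarrow> y a * r = y b * s
        \<Longrightarrow> \<exists>t\<in>Rk emb x m. r = y b * t"
      using step.IH step.prems by auto
    show ?case
      using cofactor_divisibility_lifts[OF ya yb IH] Rk_eq_ore_ring[OF m] by simp
  qed
  from this[of N] b eq show ?thesis by (auto simp: Rk_N)
qed

lemma normal_cofactor_in_Rk_pred:
  assumes i: "i \<in> {1..N}" and j: "1 \<le> j" "j < i"
  obtains b where "b \<in> Rk emb x (i - 1)" "y j * y i = y i * b"
proof -
  interpret ore_extension "Rk emb x (i - 1)" "x i" "\<sigma> i" "\<delta> i"
    using ore_extension_Rk[OF i] .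
  have jN: "j \<in> {1..N}" using i j by simp
  obtain u v where uv: "u \<in> Rk emb x (i - 1)" "v \<in> Rk emb x (i - 1)" "u \<noteq> 0" "y i = u * x i + v"
    using y_linear_in_x[OF i] by blast
  have "normal_in (Rk emb x i) (y i)" using prime_y[OF i] unfolding prime_elem_in_def by blast
  then obtain b where b: "b \<in> Rk emb x i" "y j * y i = y i * b"
    using y_mem_Rk[OF jN] j unfolding normal_in_def by fastforce
  have yj: "y j \<in> Rk emb x (i - 1)" using y_mem_Rk[OF jN] j by simp
  have "(y j * u) * x i ^ 1 + (y j * v) * x i ^ 0 \<in> deg_less (Suc (Suc 0))"
    using yj uv by (intro add_deg_less monom_deg_less mult_mem) auto
  then have "(u * x i + v) * b \<in> deg_less (Suc (Suc 0))"
    using b(2) uv(4) by (simp add: distrib_left mult.assoc)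
  moreover have "b \<in> ore_ring" using b(1) Rk_eq_ore_ring[OF i] by simp
  moreover have "zero_divisor_free (Rk emb x (i - 1))" using i by (intro zero_divisor_free_Rk) auto
  ultimately have "b \<in> deg_less (Suc 0)" using deg_less_of_mult_linear uv(1-3) by blast
  then show thesis using b(2) deg_less_1 that by blast
qed

text \<open>The torus element acting as \<open>\<sigma>\<^sub>i\<close> on \<open>R\<^sub>i\<^sub>-\<^sub>1\<close> scales \<open>y\<^sub>i\<close> and \<open>y\<^sub>j\<close>; cancelling \<open>y\<^sub>i\<close> shows
  that it scales the cofactor \<open>b\<close> exactly as it scales \<open>y\<^sub>j\<close>.\<close>

lemma sigma_scales_cofactor:
  assumes i: "i \<in> {1..N}" and j: "j \<in> {1..N}"
    and b: "b \<in> Rk emb x (i - 1)" and eq: "y j * y i = y i * b"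
  obtains c where "c \<noteq> 0" "\<sigma> i b = emb c * b"
proof -
  obtain h where h: "h \<in> torus n" "\<forall>a\<in>Rk emb x (i - 1). act h a = \<sigma> i a"
    using torus_element_acting_as_sigma[OF i] by blast
  obtain cj where cj: "cj \<noteq> 0" "act h (y j) = emb cj * y j"
    using homogeneous_eigenvalue[OF homogeneous_y[OF j] h(1)] .
  obtain ci where ci: "ci \<noteq> 0" "act h (y i) = emb ci * y i"
    using homogeneous_eigenvalue[OF homogeneous_y[OF i] h(1)] .
  have "emb ci * (y i * act h b) = act h (y i * b)"
    using act_mult[OF h(1)] ci(2) by (simp add: mult.assoc)
  also have "\<dots> = emb cj * y j * (emb ci * y i)"
    using act_mult[OF h(1)] cj(2) ci(2) by (simp flip: eq)
  also have "\<dots> = emb ci * (y i * (emb cj * b))"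
    by (metis eq mult.assoc mult_emb_left_commute)
  finally have "emb ci * (y i * (act h b - emb cj * b)) = 0"
    by (simp add: right_diff_distrib)
  then have "act h b = emb cj * b"
    using ci(1) y_nonzero[OF i] no_zero_divisors by fastforce
  then show thesis using that cj(1) h(2) b by simp
qed

text \<open>Comparing the \<open>x\<^sub>i\<close>-coefficients of \<open>y\<^sub>j y\<^sub>i = y\<^sub>i b\<close> gives \<open>y\<^sub>j u = u \<sigma>\<^sub>i(b) = c u b\<close>,
  so \<open>b\<close> is a scalar multiple of \<open>y\<^sub>j\<close>.\<close>

lemma quasi_commute_of_leading_coeff:
  assumes i: "i \<in> {1..N}" and j: "1 \<le> j" "j < i"
    and uv: "u \<in> Rk emb x (i - 1)" "v \<in> Rk emb x (i - 1)" "u \<noteq> 0" "y i = u * x i + v"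
    and l: "l \<noteq> 0" "y j * u = emb l * (u * y j)"
  shows "\<exists>l'. l' \<noteq> 0 \<and> y j * y i = emb l' * (y i * y j)"
proof -
  have jN: "j \<in> {1..N}" using i j by simp
  interpret ore_extension "Rk emb x (i - 1)" "x i" "\<sigma> i" "\<delta> i"
    using ore_extension_Rk[OF i] .
  obtain b where b: "b \<in> Rk emb x (i - 1)" "y j * y i = y i * b"
    using normal_cofactor_in_Rk_pred[OF i j] .
  obtain c where c: "c \<noteq> 0" "\<sigma> i b = emb c * b"
    using sigma_scales_cofactor[OF i jN b] .
  have yj: "y j \<in> Rk emb x (i - 1)" using y_mem_Rk[OF jN] j by simp
  have "(y j * u) * x i + y j * v = y j * y i" using uv(4) by (simp add: distrib_left mult.assoc)
  also have "\<dots> = u * (x i * b) + v * b" using b(2) uv(4) by (simp add: distrib_right mult.assoc)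
  also have "\<dots> = (u * \<sigma> i b) * x i + (u * \<delta> i b + v * b)"
    using X_mult[OF b(1)] by (simp add: distrib_left mult.assoc add.assoc)
  finally have "y j * u = u * \<sigma> i b"
    by (rule linear_coeffs_unique[rotated 4])
      (use yj uv(1,2) b(1) in \<open>blast intro: mult_mem add_mem sigma_mem delta_mem\<close>)+
  then have "u * (emb l * y j - emb c * b) = 0"
    using c(2) l(2) by (simp add: right_diff_distrib mult_emb_left_commute)
  then have "emb l * y j = emb c * b" using uv(3) no_zero_divisors by fastforce
  then have "b = emb (inverse c * l) * y j"
    using emb_inverse_cancel[OF c(1)] by (metis emb_mult mult.assoc)
  then have "y j * y i = emb (inverse c * l) * (y i * y j)"
    using b(2) by (simp add: mult_emb_left_commute)
  moreover have "inverse c * l \<noteq> 0" using c(1) l(1) by simp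
  ultimately show ?thesis by blast
qed

text \<open>Quasi-commutation is not part of the defining property of the GY elements; the leading
  coefficient of \<open>y\<^sub>i\<close> is \<open>1\<close> or \<open>y\<^sub>p\<^sub>(\<^sub>i\<^sub>)\<close> with \<open>p(i) < i\<close>, which allows induction on \<open>i\<close>.\<close>

lemma y_quasi_commute_lt:
  "i \<in> {1..N} \<Longrightarrow> 1 \<le> j \<Longrightarrow> j < i \<Longrightarrow> \<exists>l. l \<noteq> 0 \<and> y j * y i = emb l * (y i * y j)"
proof (induction i arbitrary: j rule: less_induct)
  case (less i)
  then have i: "i \<in> {1..N}" and j: "j \<in> {1..N}" by auto
  obtain u v where uv: "u \<in> Rk emb x (i - 1)" "v \<in> Rk emb x (i - 1)" "u \<noteq> 0" "y i = u * x i + v"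
    and u_cases: "\<not> has_pred \<mu> i \<and> u = 1 \<or> has_pred \<mu> i \<and> u = y (pred_idx \<mu> i)"
    using y_linear_in_x[OF i] by blast
  have "\<exists>l. l \<noteq> 0 \<and> y j * u = emb l * (u * y j)"
  proof (cases "has_pred \<mu> i")
    case False
    then show ?thesis using u_cases by (intro exI[of _ 1]) simp
  next
    case True
    define p where "p = pred_idx \<mu> i"
    have u: "u = y p" and p: "1 \<le> p" "p < i"
      using True u_cases pred_idx_bounds[OF True] unfolding p_def by auto
    consider "j < p" | "j = p" | "p < j" by linarith
    then show ?thesis
    proof cases
      case 1
      then show ?thesis using less.IH[OF p(2) _ less(3)] p i u by auto
    next
      case 2
      then show ?thesis using u by (intro exI[of _ 1]) simp
    next
      case 3
      then obtain l where l: "l \<noteq> 0" "y p * y j = emb l * (y j * y p)"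
        using less.IH[OF less(4) j p(1)] by blast
      then show ?thesis using u quasi_commute_sym[OF l] l(1) by (intro exI[of _ "inverse l"]) simp
    qed
  qed
  then show ?case using quasi_commute_of_leading_coeff[OF i less(3,4) uv] by blast
qed

lemma y_quasi_commute:
  assumes "i \<in> {1..N}" "j \<in> {1..N}"
  obtains l where "l \<noteq> 0" "y i * y j = emb l * (y j * y i)"
proof -
  consider "i < j" | "i = j" | "j < i" by linarith
  then have "\<exists>l. l \<noteq> 0 \<and> y i * y j = emb l * (y j * y i)"
  proof cases
    case 1
    then show ?thesis using y_quasi_commute_lt assms by auto
  next
    case 2
    then show ?thesis by (intro exI[of _ 1]) simp
  next
    case 3
    then obtain l where l: "l \<noteq> 0" "y j * y i = emb l * (y i * y j)"
      using y_quasi_commute_lt assms by fastforce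
    then show ?thesis using quasi_commute_sym[OF l] l(1) by (intro exI[of _ "inverse l"]) simp
  qed
  then show thesis using that by blast
qed

end

theorem propositionA2:
  fixes emb :: "'k::field_char_0 \<Rightarrow> 'r::ring_1"
    and x :: "nat \<Rightarrow> 'r" and N n :: nat
    and \<sigma> \<delta> :: "nat \<Rightarrow> 'r \<Rightarrow> 'r"
    and act :: "(nat \<Rightarrow> 'k) \<Rightarrow> 'r \<Rightarrow> 'r"
    and \<mu> :: "nat \<Rightarrow> nat" and y :: "nat \<Rightarrow> 'r"
    and i j :: nat
  assumes "QNA emb x N \<sigma> \<delta> n act"
    and "GY_elements emb x N n act \<mu> y"
    and "i \<in> {1..N}" and "j \<in> {1..N}" and "i \<noteq> j"
  shows "{y i * r |r. True} \<inter> {y j * r |r. True} = {y i * y j * r |r. True}"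
proof -
  interpret qna_gy emb x N n \<sigma> \<delta> act \<mu> y
    using assms(1,2) by (simp add: qna_gy_def qna_def qna_gy_axioms_def)
  obtain l where l: "y i * y j = emb l * (y j * y i)" using y_quasi_commute[OF assms(3,4)] .
  obtain l' where l': "y j * y i = emb l' * (y i * y j)" using y_quasi_commute[OF assms(4,3)] .
  show ?thesis
  proof (cases "i < j")
    case True
    show ?thesis
      using inter_right_ideals_eq_product[OF y_cofactor_divisible[OF assms(3,4) True] l emb_commute] .
  next
    case False
    then have "j < i" using assms(5) by simp
    have "{y j * r |r. True} \<inter> {y i * r |r. True} = {y j * y i * r |r. True}"
      using inter_right_ideals_eq_product[OF y_cofactor_divisible[OF assms(4,3) \<open>j < i\<close>] l' emb_commute] .
    then show ?thesis
      using product_right_ideal_swap[OF l l' emb_commute emb_commute] by (simp add: Int_commute)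
  qed
qed

end
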